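(* Let $P$ be a $d$-dimensional $(m+1)$-level polytope. Then the monotone diameter of $P$ is at most $(d-1)m+1$.
   Context: A polytope $P=\{\mathbf{x}: A\mathbf{x}\le \mathbf{b}\}$, with $A\mathbf{x}\le\mathbf{b}$ an irredundant description and vertex set $V(P)$, is $(m+1)$-level if for every row $\mathbf{a}^i$ of $A$, $|\{(\mathbf{a}^i)^{\intercal}\mathbf{v} : \mathbf{v}\in V(P)\}|\le m+1$. A $\mathbf{c}$-monotone path is a sequence of vertices of $P$ in which consecutive vertices are joined by an edge of $P$ and $\mathbf{c}^{\intercal}\mathbf{x}$ strictly increases; its length is its number of edges. The monotone diameter of $P$ is the maximum, over all generic linear objectives $\mathbf{c}$ (not constant on any edge) and all vertices $\mathbf{v}$, of the length of a shortest $\mathbf{c}$-monotone path from $\mathbf{v}$ to the $\mathbf{c}$-maximal vertex. *)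

theory Defs
  imports "HOL-Analysis.Analysis" "HOL-Library.Extended_Nat"
begin

definition vertices :: "'a::euclidean_space set \<Rightarrow> 'a set" where
  "vertices P = {v. v extreme_point_of P}"

definition ineq_set :: "('a::euclidean_space \<times> real) list \<Rightarrow> 'a set" where
  "ineq_set R = {x. \<forall>i<length R. fst (R ! i) \<bullet> x \<le> snd (R ! i)}"

definition irredundant :: "('a::euclidean_space \<times> real) list \<Rightarrow> bool" where
  "irredundant R \<longleftrightarrow>
     (\<forall>i<length R.
        {x. \<forall>j<length R. j \<noteq> i \<longrightarrow> fst (R ! j) \<bullet> x \<le> snd (R ! j)} \<noteq> ineq_set R)"

definition level_polytope :: "nat \<Rightarrow> 'a::euclidean_space set \<Rightarrow> bool" where
  "level_polytope k P \<longleftrightarrow>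
     (\<exists>R. P = ineq_set R \<and> irredundant R \<and>
        (\<forall>i<length R. card ((\<lambda>v. fst (R ! i) \<bullet> v) ` vertices P) \<le> k))"

definition generic_objective :: "'a::euclidean_space set \<Rightarrow> 'a \<Rightarrow> bool" where
  "generic_objective P c \<longleftrightarrow>
     (\<forall>E. E edge_of P \<longrightarrow> \<not> (\<forall>x\<in>E. \<forall>y\<in>E. c \<bullet> x = c \<bullet> y))"

definition monotone_path :: "'a::euclidean_space set \<Rightarrow> 'a \<Rightarrow> 'a list \<Rightarrow> bool" where
  "monotone_path P c p \<longleftrightarrow> p \<noteq> [] \<and> set p \<subseteq> vertices P \<and>
     (\<forall>i. Suc i < length p \<longrightarrow>
        closed_segment (p ! i) (p ! Suc i) edge_of P \<and> c \<bullet> (p ! i) < c \<bullet> (p ! Suc i))"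

definition shortest_monotone_length :: "'a::euclidean_space set \<Rightarrow> 'a \<Rightarrow> 'a \<Rightarrow> enat" where
  "shortest_monotone_length P c v =
     (INF p \<in> {p. monotone_path P c p \<and> hd p = v \<and>
                  (\<forall>u\<in>vertices P. c \<bullet> u \<le> c \<bullet> last p)}. enat (length p - 1))"

definition monotone_diameter :: "'a::euclidean_space set \<Rightarrow> enat" where
  "monotone_diameter P =
     (SUP c \<in> {c. generic_objective P c}. SUP v \<in> vertices P. shortest_monotone_length P c v)"

end

(*
  Induction on the dimension of faces. In a face F, a facet G through the start vertex v
  is cut out by a row a \<bullet> x \<le> b of the description, and by induction a c-monotone path
  in G leads from v to the c-maximum x0 of G. For a large tilt l, x0 maximises c + l a
  over F; lowering the tilt traces a shadow-vertex path from x0 to the c-maximum of F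
  along which a \<bullet> x strictly decreases. As a takes at most m + 1 values on the vertices,
  this path adds at most m edges, and a 1-dimensional face needs one edge.
  The underlying local-to-global fact, that a vertex which is not c-maximal has an
  improving edge, is proved by induction on the dimension through a facet that contains
  the vertex and an improving point. Neither irredundance of the description nor
  genericity of c is needed.
*)

theory Submission
  imports Defs
begin

lemma vertices_subset: "vertices P \<subseteq> P"
  unfolding vertices_def extreme_point_of_def by blast

lemma vertices_face_of:
  assumes "F face_of P"
  shows "vertices F = vertices P \<inter> F"
  using extreme_point_of_face[OF assms] unfolding vertices_def by blast

lemma polytope_vertices:
  fixes P :: "'a::euclidean_space set"
  assumes "polytope P"
  shows "finite (vertices P)" "P = convex hull (vertices P)"
  using assms finite_polyhedron_extreme_points polytope_imp_polyhedron
    Krein_Milman_Minkowski polytope_imp_compact polytope_imp_convex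
  unfolding vertices_def by blast+

lemma polytope_inner_le_if_vertices:
  fixes P :: "'a::euclidean_space set"
  assumes "polytope P" "\<forall>w\<in>vertices P. c \<bullet> w \<le> M" "z \<in> P"
  shows "c \<bullet> z \<le> M"
proof -
  have "convex hull (vertices P) \<subseteq> {x. c \<bullet> x \<le> M}"
    using assms(2) by (intro hull_minimal) (auto simp: convex_halfspace_le)
  then show ?thesis using polytope_vertices(2)[OF assms(1)] assms(3) by blast
qed

lemma edge_of_face_of_trans: "E edge_of G \<Longrightarrow> G face_of F \<Longrightarrow> E edge_of F"
  unfolding edge_of_def using face_of_trans by blast

lemma edge_endpoint_vertex: "closed_segment v w edge_of F \<Longrightarrow> w \<in> vertices F"
  unfolding edge_of_def vertices_def using segment_face_of(2) by blast

lemma eventually_feasible_direction: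
  fixes a :: "'i \<Rightarrow> 'a::real_inner"
  assumes "finite I" "affine A" "v \<in> A" "v + d \<in> A"
    and "\<forall>i\<in>I. a i \<bullet> v \<le> b i" "\<forall>i\<in>I. a i \<bullet> v = b i \<longrightarrow> a i \<bullet> d \<le> 0"
  shows "\<forall>\<^sub>F e in at_right 0. v + e *\<^sub>R d \<in> A \<and> (\<forall>i\<in>I. a i \<bullet> (v + e *\<^sub>R d) \<le> b i)"
proof -
  have "v + e *\<^sub>R d \<in> A" for e
  proof -
    have "(1 - e) *\<^sub>R v + e *\<^sub>R (v + d) \<in> A"
      using assms(2-4) by (intro mem_affine) auto
    then show ?thesis by (simp add: algebra_simps)
  qed
  moreover have "\<forall>\<^sub>F e in at_right 0. a i \<bullet> v + e * (a i \<bullet> d) \<le> b i" if "i \<in> I" for i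
  proof (cases "a i \<bullet> v = b i")
    case True
    then show ?thesis
      using assms(6) that eventually_at_right_less[of 0]
      by (auto elim!: eventually_mono simp: mult_nonneg_nonpos)
  next
    case False
    have "((\<lambda>e. a i \<bullet> v + e * (a i \<bullet> d)) \<longlongrightarrow> a i \<bullet> v + 0 * (a i \<bullet> d)) (at_right 0)"
      by (intro tendsto_intros)
    moreover have "a i \<bullet> v < b i" using False assms(5) that by force
    ultimately show ?thesis
      by (auto dest: order_tendstoD(2) elim!: eventually_mono)
  qed
  ultimately show ?thesis
    using assms(1) by (auto simp: inner_add_right eventually_ball_finite_distrib)
qed

lemma pivot_to_tight:
  fixes p q :: "'i \<Rightarrow> real"
  assumes "finite T" "h0 \<in> T" "0 < q h0" "\<forall>h\<in>T. p h \<le> 0"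
  obtains s h1 where "0 \<le> s" "h1 \<in> T" "p h1 + s * q h1 = 0" "\<forall>h\<in>T. p h + s * q h \<le> 0"
proof -
  define ratio where "ratio h = - p h / q h" for h
  define T' where "T' = {h\<in>T. 0 < q h}"
  have "finite T'" "T' \<noteq> {}" using assms(1-3) by (auto simp: T'_def)
  then have "Min (ratio ` T') \<in> ratio ` T'" by simp
  then obtain h1 where h1: "h1 \<in> T'" "ratio h1 = Min (ratio ` T')" by (metis imageE)
  have min: "ratio h1 \<le> ratio h" if "h \<in> T'" for h
    using h1(2) \<open>finite T'\<close> that by simp
  show thesis
  proof (rule that[of "ratio h1" h1])
    show "0 \<le> ratio h1" "h1 \<in> T" "p h1 + ratio h1 * q h1 = 0"
      using h1(1) assms(4) by (auto simp: ratio_def T'_def divide_nonpos_pos)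
    show "\<forall>h\<in>T. p h + ratio h1 * q h \<le> 0"
    proof
      fix h assume "h \<in> T"
      show "p h + ratio h1 * q h \<le> 0"
      proof (cases "0 < q h")
        case True
        then have "ratio h1 \<le> - p h / q h" using min[of h] \<open>h \<in> T\<close> by (simp add: T'_def ratio_def)
        then show ?thesis using True by (simp add: field_simps)
      next
        case False
        then have "ratio h1 * q h \<le> 0"
          using \<open>0 \<le> ratio h1\<close> by (simp add: mult_nonneg_nonpos)
        then show ?thesis using \<open>h \<in> T\<close> assms(4) by (simp add: add_nonpos_nonpos)
      qed
    qed
  qed
qed

lemma subspace_orthogonal_nonzero:
  fixes L :: "'a::euclidean_space set"
  assumes "subspace L" "2 \<le> dim L"
  obtains g where "g \<in> L" "g \<noteq> 0" "c \<bullet> g = 0"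
proof -
  have "\<exists>g\<in>L. g \<noteq> 0 \<and> c \<bullet> g = 0"
  proof (rule ccontr)
    assume none: "\<not> ?thesis"
    have "x = y" if "x \<in> L" "y \<in> L" "c \<bullet> x = c \<bullet> y" for x y
    proof -
      have "x - y \<in> L" "c \<bullet> (x - y) = 0"
        using that subspace_diff[OF assms(1)] by (auto simp: inner_diff_right)
      then show "x = y" using none by auto
    qed
    then have "inj_on (inner c) (span L)"
      unfolding inj_on_def span_eq_iff[THEN iffD2, OF assms(1)] by blast
    then have "dim (inner c ` L) = dim L"
      by (intro dim_image_eq bounded_linear.linear bounded_linear_inner_right)
    moreover have "dim (inner c ` L) \<le> 1"
      using dim_subset_UNIV[where 'a=real] by simp
    ultimately show False using assms(2) by simp
  qed
  then show thesis using that by blast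
qed

lemma polyhedron_facet_representation:
  fixes S :: "'a::euclidean_space set"
  assumes "polyhedron S"
  obtains H :: "'a set set" and a b where "finite H"
    "\<And>x. x \<in> S \<longleftrightarrow> x \<in> affine hull S \<and> (\<forall>h\<in>H. a h \<bullet> x \<le> b h)"
    "\<And>G. G facet_of S \<longleftrightarrow> (\<exists>h\<in>H. G = S \<inter> {x. a h \<bullet> x = b h})"
proof -
  obtain H where "finite H" and seq: "S = affine hull S \<inter> \<Inter>H"
    and "\<And>h. h \<in> H \<Longrightarrow> \<exists>a b. a \<noteq> 0 \<and> h = {x. a \<bullet> x \<le> b}"
    and min: "\<And>H'. H' \<subset> H \<Longrightarrow> S \<subset> affine hull S \<inter> \<Inter>H'"
    using assms by (simp add: polyhedron_Int_affine_minimal) meson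
  then obtain a b where ab: "\<And>h. h \<in> H \<Longrightarrow> a h \<noteq> 0 \<and> h = {x. a h \<bullet> x \<le> b h}"
    by metis
  have Inter_H: "\<Inter>H = {x. \<forall>h\<in>H. a h \<bullet> x \<le> b h}"
    using ab by blast
  show thesis
  proof (rule that[of H a b])
    show "x \<in> S \<longleftrightarrow> x \<in> affine hull S \<and> (\<forall>h\<in>H. a h \<bullet> x \<le> b h)" for x
    proof -
      have "x \<in> S \<longleftrightarrow> x \<in> affine hull S \<inter> \<Inter>H" by (subst seq) (rule refl)
      then show ?thesis using Inter_H by simp
    qed
  qed (use \<open>finite H\<close> facet_of_polyhedron_explicit[OF \<open>finite H\<close> seq ab min] in auto)
qed

lemma affine_hull_directions:
  fixes S :: "'a::euclidean_space set"
  assumes "v \<in> affine hull S"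
  shows "subspace {u. v + u \<in> affine hull S}" "aff_dim S = int (dim {u. v + u \<in> affine hull S})"
proof -
  have L_eq: "{u. v + u \<in> affine hull S} = (\<lambda>x. x - v) ` (affine hull S)"
    by (auto simp: image_def) (metis add_diff_cancel_left')
  show "subspace {u. v + u \<in> affine hull S}"
    unfolding L_eq using assms by (intro affine_diffs_subspace_subtract) auto
  show "aff_dim S = int (dim {u. v + u \<in> affine hull S})"
    using assms aff_dim_eq_dim_subtract[of v "affine hull S"] by (simp add: L_eq)
qed

lemma extreme_point_tight_nonorthogonal:
  fixes a :: "'i \<Rightarrow> 'a::euclidean_space"
  assumes "finite H" "affine A" "\<And>x. x \<in> S \<longleftrightarrow> x \<in> A \<and> (\<forall>h\<in>H. a h \<bullet> x \<le> b h)"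
    and "v extreme_point_of S" "v + g \<in> A" "v - g \<in> A" "g \<noteq> 0"
  shows "\<exists>h\<in>H. a h \<bullet> v = b h \<and> a h \<bullet> g \<noteq> 0"
proof (rule ccontr)
  assume none: "\<not> ?thesis"
  have "v \<in> S" using assms(4) by (simp add: extreme_point_of_def)
  then have "v \<in> A" "\<forall>h\<in>H. a h \<bullet> v \<le> b h" using assms(3) by auto
  moreover have "\<forall>h\<in>H. a h \<bullet> v = b h \<longrightarrow> a h \<bullet> g = 0" using none by auto
  ultimately have "\<forall>\<^sub>F e in at_right 0. v + e *\<^sub>R g \<in> A \<and> (\<forall>h\<in>H. a h \<bullet> (v + e *\<^sub>R g) \<le> b h)"
    and "\<forall>\<^sub>F e in at_right 0. v + e *\<^sub>R (- g) \<in> A \<and> (\<forall>h\<in>H. a h \<bullet> (v + e *\<^sub>R (- g)) \<le> b h)"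
    using assms(1,2,5,6) by (intro eventually_feasible_direction; simp)+
  from eventually_happens'[OF trivial_limit_at_right_real
      eventually_conj[OF eventually_at_right_less eventually_conj[OF this]]]
  obtain e where "0 < e" "v + e *\<^sub>R g \<in> S" "v - e *\<^sub>R g \<in> S"
    using assms(3) by auto
  moreover have "v \<in> open_segment (v + e *\<^sub>R g) (v - e *\<^sub>R g)"
  proof -
    have "(v + e *\<^sub>R g) - (v - e *\<^sub>R g) = (2 * e) *\<^sub>R g"
      by (simp add: algebra_simps flip: scaleR_add_left)
    moreover have "(2 * e) *\<^sub>R g \<noteq> 0" using \<open>0 < e\<close> assms(7) by simp
    ultimately have "v + e *\<^sub>R g \<noteq> v - e *\<^sub>R g" by (metis diff_self)
    moreover have "midpoint (v + e *\<^sub>R g) (v - e *\<^sub>R g) = v"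
      by (simp add: midpoint_def algebra_simps flip: scaleR_add_left)
    ultimately show ?thesis using midpoint_in_open_segment by metis
  qed
  ultimately show False
    using assms(4) unfolding extreme_point_of_def by blast
qed

text \<open>The improving direction y - v is tilted, inside the affine hull and orthogonally to c,
  until an inequality tight at v stays tight along it; that inequality's facet then contains v
  and points better than v.\<close>

lemma polyhedron_improving_facet:
  fixes S :: "'a::euclidean_space set"
  assumes "polyhedron S" "2 \<le> aff_dim S" "v extreme_point_of S" "y \<in> S" "c \<bullet> v < c \<bullet> y"
  obtains G z where "G facet_of S" "v \<in> G" "z \<in> G" "c \<bullet> v < c \<bullet> z"
proof -
  obtain H :: "'a set set" and a b where "finite H"
    and memS: "\<And>x. x \<in> S \<longleftrightarrow> x \<in> affine hull S \<and> (\<forall>h\<in>H. a h \<bullet> x \<le> b h)"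
    and facets: "\<And>G. G facet_of S \<longleftrightarrow> (\<exists>h\<in>H. G = S \<inter> {x. a h \<bullet> x = b h})"
    using polyhedron_facet_representation[OF assms(1)] by blast
  have "v \<in> S" using assms(3) by (simp add: extreme_point_of_def)
  define L where "L = {u. v + u \<in> affine hull S}"
  have "v \<in> affine hull S" using \<open>v \<in> S\<close> by (rule hull_inc)
  then have "subspace L" "aff_dim S = int (dim L)"
    unfolding L_def by (rule affine_hull_directions)+
  moreover from this(2) have "2 \<le> dim L" using assms(2) by simp
  ultimately obtain g where g: "g \<in> L" "g \<noteq> 0" "c \<bullet> g = 0"
    using subspace_orthogonal_nonzero by blast
  define T where "T = {h\<in>H. a h \<bullet> v = b h}"
  have "- g \<in> L" using g(1) \<open>subspace L\<close> by (simp add: subspace_neg)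
  then obtain h0 where "h0 \<in> T" "a h0 \<bullet> g \<noteq> 0"
    using extreme_point_tight_nonorthogonal[OF \<open>finite H\<close> affine_affine_hull memS assms(3)] g
    by (auto simp: L_def T_def)
  define g' where "g' = (if 0 < a h0 \<bullet> g then g else - g)"
  have "0 < a h0 \<bullet> g'" "g' \<in> L" "c \<bullet> g' = 0"
    using \<open>a h0 \<bullet> g \<noteq> 0\<close> g \<open>- g \<in> L\<close> by (auto simp: g'_def)
  define d where "d = y - v"
  have "d \<in> L" using assms(4) by (simp add: d_def L_def hull_inc)
  have "0 < c \<bullet> d" using assms(5) by (simp add: d_def inner_diff_right)
  have "\<forall>h\<in>T. a h \<bullet> d \<le> 0" using assms(4) memS by (auto simp: T_def d_def inner_diff_right)
  moreover have "finite T" using \<open>finite H\<close> by (simp add: T_def)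
  ultimately obtain s h1 where "h1 \<in> T" "a h1 \<bullet> d + s * (a h1 \<bullet> g') = 0"
    and tight_le: "\<forall>h\<in>T. a h \<bullet> d + s * (a h \<bullet> g') \<le> 0"
    using pivot_to_tight[of T h0 "\<lambda>h. a h \<bullet> g'" "\<lambda>h. a h \<bullet> d"] \<open>h0 \<in> T\<close> \<open>0 < a h0 \<bullet> g'\<close> by blast
  define d' where "d' = d + s *\<^sub>R g'"
  have "d' \<in> L"
    using \<open>d \<in> L\<close> \<open>g' \<in> L\<close> \<open>subspace L\<close> by (simp add: d'_def subspace_add subspace_scale)
  then have "v + d' \<in> affine hull S" by (simp add: L_def)
  then have "\<forall>\<^sub>F e in at_right 0. v + e *\<^sub>R d' \<in> affine hull S \<and> (\<forall>h\<in>H. a h \<bullet> (v + e *\<^sub>R d') \<le> b h)"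
    using \<open>finite H\<close> \<open>v \<in> S\<close> memS tight_le
    by (intro eventually_feasible_direction) (auto simp: T_def d'_def inner_add_right)
  from eventually_happens'[OF trivial_limit_at_right_real eventually_conj[OF eventually_at_right_less this]]
  obtain e where "0 < e" "v + e *\<^sub>R d' \<in> S"
    using memS by auto
  show thesis
  proof (rule that)
    show "S \<inter> {x. a h1 \<bullet> x = b h1} facet_of S" using \<open>h1 \<in> T\<close> facets by (auto simp: T_def)
    show "v \<in> S \<inter> {x. a h1 \<bullet> x = b h1}" using \<open>v \<in> S\<close> \<open>h1 \<in> T\<close> by (simp add: T_def)
    show "v + e *\<^sub>R d' \<in> S \<inter> {x. a h1 \<bullet> x = b h1}"
      using \<open>v + e *\<^sub>R d' \<in> S\<close> \<open>h1 \<in> T\<close> \<open>a h1 \<bullet> d + s * (a h1 \<bullet> g') = 0\<close>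
      by (simp add: T_def d'_def inner_add_right)
    show "c \<bullet> v < c \<bullet> (v + e *\<^sub>R d')"
      using \<open>0 < e\<close> \<open>0 < c \<bullet> d\<close> \<open>c \<bullet> g' = 0\<close> by (simp add: d'_def inner_add_right)
  qed
qed

lemma polytope_improving_edge:
  fixes S :: "'a::euclidean_space set"
  assumes "polytope S" "v extreme_point_of S" "y \<in> S" "c \<bullet> v < c \<bullet> y"
  shows "\<exists>w. closed_segment v w edge_of S \<and> c \<bullet> v < c \<bullet> w"
  using assms
proof (induction "nat (aff_dim S)" arbitrary: S y rule: less_induct)
  case less
  show ?case
  proof (cases "aff_dim S \<le> 1")
    case True
    have "S \<noteq> {}" using \<open>y \<in> S\<close> by blast
    moreover have "compact S" "convex S" "collinear S"
      using less.prems(1) True by (simp_all add: polytope_imp_compact polytope_imp_convex collinear_aff_dim)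
    ultimately obtain a b where ab: "S = closed_segment a b"
      by (rule compact_convex_collinear_segment)
    then have "v = a \<or> v = b" using less.prems(2) extreme_point_of_segment by blast
    then obtain w where S: "S = closed_segment v w"
      using ab closed_segment_commute by blast
    have "c \<bullet> v < c \<bullet> w"
    proof (rule ccontr)
      assume "\<not> ?thesis"
      then have "S \<subseteq> {x. c \<bullet> x \<le> c \<bullet> v}"
        unfolding S by (intro closed_segment_subset) (auto simp: convex_halfspace_le)
      then show False using less.prems(3,4) by auto
    qed
    moreover have "S edge_of S"
      unfolding edge_of_def S using \<open>c \<bullet> v < c \<bullet> w\<close>
      by (auto simp: face_of_refl segment_convex_hull aff_dim_convex_hull)
    ultimately show ?thesis using S by blast
  next
    case False
    then have "2 \<le> aff_dim S" by simp
    then obtain G z where G: "G facet_of S" "v \<in> G" "z \<in> G" "c \<bullet> v < c \<bullet> z"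
      using polytope_imp_polyhedron[OF less.prems(1)] polyhedron_improving_facet less.prems(2-4)
      by blast
    have "G face_of S" using G(1) by (rule facet_of_imp_face_of)
    moreover have "nat (aff_dim G) < nat (aff_dim S)" using G(1) False by (simp add: facet_of_def)
    moreover have "polytope G" using \<open>G face_of S\<close> less.prems(1) face_of_polytope_polytope by blast
    moreover have "v extreme_point_of G" using \<open>G face_of S\<close> G(2) less.prems(2) extreme_point_of_face by blast
    ultimately obtain w where "closed_segment v w edge_of G" "c \<bullet> v < c \<bullet> w"
      using less.hyps G(3,4) by blast
    then show ?thesis using \<open>G face_of S\<close> edge_of_face_of_trans by blast
  qed
qed

lemma tight_at_rel_interior_imp_tight:
  fixes G :: "'a::euclidean_space set"
  assumes "convex G" "\<forall>x\<in>G. a \<bullet> x \<le> b" "g \<in> rel_interior G" "a \<bullet> g = b" "z \<in> G"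
  shows "a \<bullet> z = b"
proof -
  have "G \<inter> {x. a \<bullet> x = b} face_of G"
    using face_of_Int_supporting_hyperplane_le[OF assms(1)] assms(2) by blast
  moreover have "(G \<inter> {x. a \<bullet> x = b}) \<inter> rel_interior G \<noteq> {}"
    using assms(3,4) rel_interior_subset by blast
  ultimately have "G \<subseteq> G \<inter> {x. a \<bullet> x = b}"
    using subset_of_face_of by blast
  then show ?thesis using assms(5) by blast
qed

lemma open_segment_extension:
  fixes g y :: "'a::real_vector"
  assumes "0 < e" "g \<noteq> y"
  shows "g \<in> open_segment (g + e *\<^sub>R (g - y)) y"
proof -
  define z where "z = g + e *\<^sub>R (g - y)"
  define u where "u = e / (1 + e)"
  have "0 < u" "u < 1" using assms(1) by (simp_all add: u_def)
  have "(1 - u) * (1 + e) = 1" "u - (1 - u) * e = 0" using assms(1) by (simp_all add: u_def field_simps)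
  moreover have "(1 - u) *\<^sub>R z + u *\<^sub>R y = ((1 - u) * (1 + e)) *\<^sub>R g + (u - (1 - u) * e) *\<^sub>R y"
    by (simp add: z_def algebra_simps)
  ultimately have "g = (1 - u) *\<^sub>R z + u *\<^sub>R y" by simp
  moreover have "z \<noteq> y"
  proof
    assume "z = y"
    then have "(1 + e) *\<^sub>R (g - y) = 0" by (simp add: z_def algebra_simps)
    then show False using assms by simp
  qed
  ultimately show ?thesis
    using \<open>0 < u\<close> \<open>u < 1\<close> unfolding in_segment z_def by blast
qed

lemma face_of_ineq_set_separating_row:
  assumes "G face_of ineq_set R" "G \<noteq> {}" "y \<in> ineq_set R" "y \<notin> G"
  shows "\<exists>i<length R. (\<forall>z\<in>G. fst (R ! i) \<bullet> z = snd (R ! i)) \<and> fst (R ! i) \<bullet> y < snd (R ! i)"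
proof (rule ccontr)
  assume none: "\<not> ?thesis"
  define a where "a i = fst (R ! i)" for i
  define b where "b i = snd (R ! i)" for i
  have memP: "x \<in> ineq_set R \<longleftrightarrow> (\<forall>i<length R. a i \<bullet> x \<le> b i)" for x
    by (simp add: ineq_set_def a_def b_def)
  have "G \<subseteq> ineq_set R" "convex G" using assms(1) face_of_imp_subset face_of_imp_convex by blast+
  obtain g where "g \<in> rel_interior G"
    using rel_interior_eq_empty \<open>convex G\<close> assms(2) by blast
  then have "g \<in> G" using rel_interior_subset by blast
  have "a i \<bullet> (g - y) \<le> 0" if "i < length R" "a i \<bullet> g = b i" for i
  proof -
    have "\<forall>z\<in>G. a i \<bullet> z = b i"
      using tight_at_rel_interior_imp_tight[OF \<open>convex G\<close> _ \<open>g \<in> rel_interior G\<close>] that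
        \<open>G \<subseteq> ineq_set R\<close> memP by blast
    moreover have "a i \<bullet> y \<le> b i" using assms(3) memP that(1) by blast
    ultimately have "a i \<bullet> y = b i" using none that(1) by (force simp: a_def b_def)
    then show ?thesis using that(2) by (simp add: inner_diff_right)
  qed
  then have "\<forall>\<^sub>F e in at_right 0. g + e *\<^sub>R (g - y) \<in> UNIV \<and>
      (\<forall>i\<in>{..<length R}. a i \<bullet> (g + e *\<^sub>R (g - y)) \<le> b i)"
    using \<open>g \<in> G\<close> \<open>G \<subseteq> ineq_set R\<close> memP
    by (intro eventually_feasible_direction) auto
  from eventually_happens'[OF trivial_limit_at_right_real eventually_conj[OF this eventually_at_right_less]]
  obtain e where "0 < e" "g + e *\<^sub>R (g - y) \<in> ineq_set R"
    using memP by auto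
  moreover have "g \<in> open_segment (g + e *\<^sub>R (g - y)) y"
    using \<open>0 < e\<close> \<open>g \<in> G\<close> assms(4) by (intro open_segment_extension) auto
  ultimately have "y \<in> G"
    using face_ofD[OF assms(1)] assms(3) \<open>g \<in> G\<close> by blast
  then show False using assms(4) by blast
qed

lemma facet_of_face_of_ineq_set:
  assumes "F face_of ineq_set R" "G facet_of F"
  shows "\<exists>i<length R. G = F \<inter> {x. fst (R ! i) \<bullet> x = snd (R ! i)}"
proof -
  have "G face_of F" "G \<noteq> {}" "aff_dim G = aff_dim F - 1"
    using assms(2) by (auto simp: facet_of_def)
  have "F \<subseteq> ineq_set R" "G \<subseteq> F" "convex F"
    using assms(1) \<open>G face_of F\<close> face_of_imp_subset face_of_imp_convex by blast+
  have "G \<noteq> F" using \<open>aff_dim G = aff_dim F - 1\<close> by auto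
  then obtain y where "y \<in> F" "y \<notin> G"
    using \<open>G \<subseteq> F\<close> by blast
  then obtain i where i: "i < length R" "\<forall>z\<in>G. fst (R ! i) \<bullet> z = snd (R ! i)"
    "fst (R ! i) \<bullet> y < snd (R ! i)"
    using face_of_ineq_set_separating_row[OF face_of_trans[OF \<open>G face_of F\<close> assms(1)] \<open>G \<noteq> {}\<close>]
      \<open>F \<subseteq> ineq_set R\<close> by blast
  define H where "H = F \<inter> {x. fst (R ! i) \<bullet> x = snd (R ! i)}"
  have "H face_of F"
    unfolding H_def using \<open>F \<subseteq> ineq_set R\<close> i(1)
    by (intro face_of_Int_supporting_hyperplane_le \<open>convex F\<close>) (auto simp: ineq_set_def)
  have "G \<subseteq> H" using i(2) \<open>G \<subseteq> F\<close> by (auto simp: H_def)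
  have "y \<notin> H" using i(3) by (simp add: H_def)
  then have "H \<noteq> F" using \<open>y \<in> F\<close> by blast
  then have "aff_dim H < aff_dim F"
    using face_of_aff_dim_lt[OF \<open>convex F\<close> \<open>H face_of F\<close>] by blast
  have "G = H"
  proof (rule ccontr)
    assume "G \<noteq> H"
    have "G face_of H"
      using face_of_subset[OF \<open>G face_of F\<close> \<open>G \<subseteq> H\<close>] \<open>H face_of F\<close> face_of_imp_subset by blast
    then have "aff_dim G < aff_dim H"
      using face_of_aff_dim_lt[OF face_of_imp_convex[OF \<open>H face_of F\<close>]] \<open>G \<noteq> H\<close> by blast
    then show False using \<open>aff_dim H < aff_dim F\<close> \<open>aff_dim G = aff_dim F - 1\<close> by linarith
  qed
  then show ?thesis using i(1) by (auto simp: H_def)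
qed

lemma monotone_path_iff:
  "monotone_path P c p \<longleftrightarrow> p \<noteq> [] \<and> set p \<subseteq> vertices P \<and>
     successively (\<lambda>u w. closed_segment u w edge_of P \<and> c \<bullet> u < c \<bullet> w) p"
  by (auto simp: monotone_path_def successively_conv_nth)

lemma monotone_path_singleton: "x \<in> vertices P \<Longrightarrow> monotone_path P c [x]"
  by (simp add: monotone_path_iff)

lemma monotone_path_Cons:
  assumes "monotone_path P c p" "x \<in> vertices P" "closed_segment x (hd p) edge_of P" "c \<bullet> x < c \<bullet> hd p"
  shows "monotone_path P c (x # p)"
  using assms by (cases p) (auto simp: monotone_path_iff)

lemma monotone_path_face_of:
  assumes "F face_of P" "monotone_path F c p"
  shows "monotone_path P c p"
proof -
  have "set p \<subseteq> vertices P" using assms vertices_face_of[OF assms(1)] by (auto simp: monotone_path_iff)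
  then show ?thesis
    using assms edge_of_face_of_trans by (auto simp: monotone_path_iff elim!: successively_mono)
qed

lemma monotone_path_join:
  assumes "monotone_path P c p" "monotone_path P c q" "hd q = last p"
  shows "monotone_path P c (p @ tl q)" "last (p @ tl q) = last q"
proof -
  obtain r where q: "q = last p # r" using assms(2,3) by (cases q) (auto simp: monotone_path_iff)
  then show "monotone_path P c (p @ tl q)"
    using assms(1,2) by (auto simp: monotone_path_iff successively_append_iff successively_Cons)
  show "last (p @ tl q) = last q"
    using q assms(1) by (cases r) (auto simp: monotone_path_iff)
qed

lemma tilted_objective_max:
  fixes F :: "'a::euclidean_space set"
  assumes "polytope F" "\<forall>x\<in>F. a \<bullet> x \<le> b" "x0 \<in> F" "a \<bullet> x0 = b"
    and "\<forall>z\<in>F. a \<bullet> z = b \<longrightarrow> c \<bullet> z \<le> c \<bullet> x0"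
  obtains l where "0 < l" "\<forall>z\<in>F. (c + l *\<^sub>R a) \<bullet> z \<le> (c + l *\<^sub>R a) \<bullet> x0"
proof -
  define W where "W = {w \<in> vertices F. a \<bullet> w < b}"
  define l where "l = 1 + (\<Sum>w\<in>W. \<bar>c \<bullet> w - c \<bullet> x0\<bar> / (b - a \<bullet> w))"
  have "finite W" using polytope_vertices(1)[OF assms(1)] by (simp add: W_def)
  have nonneg: "0 \<le> \<bar>c \<bullet> w - c \<bullet> x0\<bar> / (b - a \<bullet> w)" if "w \<in> W" for w
    using that by (simp add: W_def)
  then have "0 < l" unfolding l_def by (simp add: sum_nonneg add_pos_nonneg)
  have "(c + l *\<^sub>R a) \<bullet> w \<le> (c + l *\<^sub>R a) \<bullet> x0" if "w \<in> vertices F" for w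
  proof (cases "a \<bullet> w < b")
    case True
    then have "\<bar>c \<bullet> w - c \<bullet> x0\<bar> / (b - a \<bullet> w) \<le> (\<Sum>w\<in>W. \<bar>c \<bullet> w - c \<bullet> x0\<bar> / (b - a \<bullet> w))"
      using that \<open>finite W\<close> nonneg by (intro member_le_sum) (auto simp: W_def)
    then have "\<bar>c \<bullet> w - c \<bullet> x0\<bar> / (b - a \<bullet> w) \<le> l" by (simp add: l_def)
    then have "c \<bullet> w - c \<bullet> x0 \<le> l * (b - a \<bullet> w)"
      using True by (simp add: pos_divide_le_eq)
    then show ?thesis using assms(4) by (simp add: inner_add_left algebra_simps)
  next
    case False
    then have "a \<bullet> w = b" using assms(2) that vertices_subset by force
    then show ?thesis using assms(4,5) that vertices_subset by (force simp: inner_add_left)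
  qed
  then show thesis
    using that \<open>0 < l\<close> polytope_inner_le_if_vertices[OF assms(1)] by blast
qed

lemma tilt_between:
  fixes \<mu> l dc da :: real
  assumes "0 < \<mu>" "\<mu> \<le> l" "dc \<le> l * da" "0 < dc \<Longrightarrow> dc \<le> \<mu> * da"
  shows "dc \<le> \<mu> * da"
proof (cases "0 < dc")
  case False
  show ?thesis
  proof (cases "0 \<le> da")
    case True
    then show ?thesis using False assms(1) by (simp add: order_trans[OF _ mult_nonneg_nonneg])
  next
    case False
    then have "l * da \<le> \<mu> * da" using assms(2) by (simp add: mult_right_mono_neg)
    then show ?thesis using assms(3) by linarith
  qed
qed (rule assms(4))

text \<open>w is the improving neighbour with the largest ratio of c-gain to a-loss; at the tilt
  \<mu> equal to that ratio, x and w are both optimal.\<close>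

lemma shadow_step:
  fixes F :: "'a::euclidean_space set"
  assumes "polytope F" "x \<in> vertices F" "0 < l" "\<forall>z\<in>F. (c + l *\<^sub>R a) \<bullet> z \<le> (c + l *\<^sub>R a) \<bullet> x"
    and "y \<in> F" "c \<bullet> x < c \<bullet> y"
  obtains w \<mu> where "closed_segment x w edge_of F" "c \<bullet> x < c \<bullet> w" "a \<bullet> w < a \<bullet> x" "0 < \<mu>"
    "\<forall>z\<in>F. (c + \<mu> *\<^sub>R a) \<bullet> z \<le> (c + \<mu> *\<^sub>R a) \<bullet> w"
proof -
  have x_ext: "x extreme_point_of F" using assms(2) by (simp add: vertices_def)
  have edge_in: "w \<in> F" if "closed_segment x w edge_of F" for w
    using that edge_endpoint_vertex vertices_subset by blast
  have l_bound: "c \<bullet> w - c \<bullet> x \<le> l * (a \<bullet> x - a \<bullet> w)" if "w \<in> F" for w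
    using assms(4) that by (auto simp: inner_add_left algebra_simps)
  define N where "N = {w. closed_segment x w edge_of F \<and> c \<bullet> x < c \<bullet> w}"
  have "finite N"
    using polytope_vertices(1)[OF assms(1)] edge_endpoint_vertex
    by (auto simp: N_def intro: finite_subset)
  have "N \<noteq> {}"
    using polytope_improving_edge[OF assms(1) x_ext assms(5,6)] by (auto simp: N_def)
  have a_dec: "0 < a \<bullet> x - a \<bullet> w" if "w \<in> N" for w
  proof -
    have "c \<bullet> w - c \<bullet> x \<le> l * (a \<bullet> x - a \<bullet> w)" "c \<bullet> x < c \<bullet> w"
      using that l_bound edge_in by (auto simp: N_def)
    then have "0 < l * (a \<bullet> x - a \<bullet> w)" by linarith
    then show ?thesis using assms(3) by (simp add: zero_less_mult_iff)
  qed
  define slope where "slope w = (c \<bullet> w - c \<bullet> x) / (a \<bullet> x - a \<bullet> w)" for w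
  have "Max (slope ` N) \<in> slope ` N" using \<open>finite N\<close> \<open>N \<noteq> {}\<close> by simp
  then obtain ws where "ws \<in> N" "slope ws = Max (slope ` N)" by (metis imageE)
  define \<mu> where "\<mu> = slope ws"
  have slope_le: "c \<bullet> w - c \<bullet> x \<le> \<mu> * (a \<bullet> x - a \<bullet> w)" if "w \<in> N" for w
  proof -
    have "slope w \<le> \<mu>" using \<open>slope ws = Max (slope ` N)\<close> \<open>finite N\<close> that by (simp add: \<mu>_def)
    then show ?thesis using a_dec[OF that] by (simp add: slope_def pos_divide_le_eq)
  qed
  have "0 < \<mu>" using \<open>ws \<in> N\<close> a_dec[OF \<open>ws \<in> N\<close>] by (simp add: \<mu>_def slope_def N_def)
  have "\<mu> \<le> l"
    using l_bound[OF edge_in] \<open>ws \<in> N\<close> a_dec[OF \<open>ws \<in> N\<close>] by (simp add: \<mu>_def slope_def N_def divide_le_eq)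
  have "(c + \<mu> *\<^sub>R a) \<bullet> w \<le> (c + \<mu> *\<^sub>R a) \<bullet> x" if "closed_segment x w edge_of F" for w
  proof -
    have "c \<bullet> w - c \<bullet> x \<le> \<mu> * (a \<bullet> x - a \<bullet> w)"
    proof (rule tilt_between[OF \<open>0 < \<mu>\<close> \<open>\<mu> \<le> l\<close> l_bound[OF edge_in[OF that]]])
      assume "0 < c \<bullet> w - c \<bullet> x"
      then have "w \<in> N" using that by (simp add: N_def)
      then show "c \<bullet> w - c \<bullet> x \<le> \<mu> * (a \<bullet> x - a \<bullet> w)" by (rule slope_le)
    qed
    then show ?thesis by (simp add: inner_add_left algebra_simps)
  qed
  then have x_max: "\<forall>z\<in>F. (c + \<mu> *\<^sub>R a) \<bullet> z \<le> (c + \<mu> *\<^sub>R a) \<bullet> x"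
    using polytope_improving_edge[OF assms(1) x_ext] by (meson not_le)
  have "\<mu> * (a \<bullet> x - a \<bullet> ws) = c \<bullet> ws - c \<bullet> x"
    using a_dec[OF \<open>ws \<in> N\<close>] by (simp add: \<mu>_def slope_def)
  then have "(c + \<mu> *\<^sub>R a) \<bullet> ws = (c + \<mu> *\<^sub>R a) \<bullet> x"
    by (simp add: inner_add_left right_diff_distrib)
  then show thesis
    using that[of ws \<mu>] \<open>ws \<in> N\<close> a_dec[OF \<open>ws \<in> N\<close>] \<open>0 < \<mu>\<close> x_max by (simp add: N_def)
qed

lemma shadow_path:
  fixes F :: "'a::euclidean_space set"
  assumes "polytope F" "x \<in> vertices F" "0 < l" "\<forall>z\<in>F. (c + l *\<^sub>R a) \<bullet> z \<le> (c + l *\<^sub>R a) \<bullet> x"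
  shows "\<exists>p. monotone_path F c p \<and> hd p = x \<and> (\<forall>z\<in>F. c \<bullet> z \<le> c \<bullet> last p) \<and>
           length p \<le> card ((\<lambda>z. a \<bullet> z) ` {w \<in> vertices F. a \<bullet> w \<le> a \<bullet> x})"
  using assms(2-4)
proof (induction "card {w \<in> vertices F. c \<bullet> x < c \<bullet> w}" arbitrary: x l rule: less_induct)
  case less
  have fin: "finite (vertices F)" using polytope_vertices(1)[OF assms(1)] .
  define A where "A t = (\<lambda>z. a \<bullet> z) ` {w \<in> vertices F. a \<bullet> w \<le> t}" for t
  have "finite (A t)" for t using fin by (simp add: A_def)
  show ?case
  proof (cases "\<forall>z\<in>F. c \<bullet> z \<le> c \<bullet> x")
    case True
    have "a \<bullet> x \<in> A (a \<bullet> x)" using less.prems(1) by (auto simp: A_def)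
    then have "1 \<le> card (A (a \<bullet> x))"
      using \<open>finite (A (a \<bullet> x))\<close> by (metis One_nat_def Suc_leI card_gt_0_iff empty_iff)
    then show ?thesis
      using True monotone_path_singleton[OF less.prems(1)] by (intro exI[of _ "[x]"]) (simp add: A_def)
  next
    case False
    then obtain y where "y \<in> F" "c \<bullet> x < c \<bullet> y" by (auto simp: not_le)
    then obtain w \<mu> where w: "closed_segment x w edge_of F" "c \<bullet> x < c \<bullet> w" "a \<bullet> w < a \<bullet> x" "0 < \<mu>"
      "\<forall>z\<in>F. (c + \<mu> *\<^sub>R a) \<bullet> z \<le> (c + \<mu> *\<^sub>R a) \<bullet> w"
      using shadow_step[OF assms(1) less.prems] by blast
    have "w \<in> vertices F" using w(1) by (rule edge_endpoint_vertex)
    then have "{u \<in> vertices F. c \<bullet> w < c \<bullet> u} \<subset> {u \<in> vertices F. c \<bullet> x < c \<bullet> u}"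
      using w(2) by auto
    then have "card {u \<in> vertices F. c \<bullet> w < c \<bullet> u} < card {u \<in> vertices F. c \<bullet> x < c \<bullet> u}"
      using fin by (intro psubset_card_mono) auto
    then obtain p where p: "monotone_path F c p" "hd p = w" "\<forall>z\<in>F. c \<bullet> z \<le> c \<bullet> last p"
      "length p \<le> card (A (a \<bullet> w))"
      using less.hyps \<open>w \<in> vertices F\<close> w(4,5) unfolding A_def by blast
    have "insert (a \<bullet> x) (A (a \<bullet> w)) \<subseteq> A (a \<bullet> x)" "a \<bullet> x \<notin> A (a \<bullet> w)"
      using w(3) less.prems(1) by (auto simp: A_def)
    then have "Suc (card (A (a \<bullet> w))) \<le> card (A (a \<bullet> x))"
      using \<open>\<And>t. finite (A t)\<close> by (metis card_insert_disjoint card_mono)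
    moreover have "monotone_path F c (x # p)"
      using monotone_path_Cons[OF p(1) less.prems(1)] w(1,2) p(2) by simp
    moreover have "p \<noteq> []" using p(1) by (simp add: monotone_path_def)
    ultimately show ?thesis
      using p by (intro exI[of _ "x # p"]) (simp add: A_def)
  qed
qed

lemma monotone_path_aff_dim_1:
  fixes F :: "'a::euclidean_space set"
  assumes "polytope F" "aff_dim F = 1" "v \<in> vertices F"
  shows "\<exists>p. monotone_path F c p \<and> hd p = v \<and> (\<forall>z\<in>F. c \<bullet> z \<le> c \<bullet> last p) \<and> length p \<le> 2"
proof (cases "\<forall>z\<in>F. c \<bullet> z \<le> c \<bullet> v")
  case True
  then show ?thesis using monotone_path_singleton[OF assms(3)] by (intro exI[of _ "[v]"]) simp
next
  case False
  then obtain y where "y \<in> F" "c \<bullet> v < c \<bullet> y" by (auto simp: not_le)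
  moreover have "v extreme_point_of F" using assms(3) by (simp add: vertices_def)
  ultimately obtain w where w: "closed_segment v w edge_of F" "c \<bullet> v < c \<bullet> w"
    using polytope_improving_edge[OF assms(1)] by blast
  have "closed_segment v w = F"
  proof (rule ccontr)
    assume "closed_segment v w \<noteq> F"
    moreover have "closed_segment v w face_of F" using w(1) by (simp add: edge_of_def)
    ultimately have "aff_dim (closed_segment v w) < aff_dim F"
      using face_of_aff_dim_lt[OF polytope_imp_convex[OF assms(1)]] by blast
    then show False using w(1) assms(2) by (simp add: edge_of_def)
  qed
  then have "\<forall>z\<in>F. c \<bullet> z \<le> c \<bullet> w"
    using w(2) closed_segment_subset[of v "{x. c \<bullet> x \<le> c \<bullet> w}" w] by (auto simp: convex_halfspace_le)
  moreover have "monotone_path F c [v, w]"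
    using monotone_path_Cons[OF monotone_path_singleton[OF edge_endpoint_vertex[OF w(1)]] assms(3)] w
    by simp
  ultimately show ?thesis by (intro exI[of _ "[v, w]"]) simp
qed

lemma monotone_path_extend_from_facet:
  fixes F :: "'a::euclidean_space set"
  assumes "F face_of ineq_set R" "polytope F" "G facet_of F"
    and "monotone_path G c p1" "\<forall>z\<in>G. c \<bullet> z \<le> c \<bullet> last p1"
  obtains i p where "i < length R" "monotone_path F c p" "hd p = hd p1" "\<forall>z\<in>F. c \<bullet> z \<le> c \<bullet> last p"
    "length p + 1 \<le> length p1 + card ((\<lambda>z. fst (R ! i) \<bullet> z) ` vertices F)"
proof -
  have "G face_of F" using assms(3) by (rule facet_of_imp_face_of)
  define x0 where "x0 = last p1"
  have "x0 \<in> vertices G" using assms(4) by (auto simp: x0_def monotone_path_iff)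
  then have "x0 \<in> vertices F" "x0 \<in> G" using vertices_face_of[OF \<open>G face_of F\<close>] by auto
  obtain i where "i < length R" and G_eq: "G = F \<inter> {x. fst (R ! i) \<bullet> x = snd (R ! i)}"
    using facet_of_face_of_ineq_set[OF assms(1,3)] by blast
  define a b where "a = fst (R ! i)" and "b = snd (R ! i)"
  have "\<forall>x\<in>F. a \<bullet> x \<le> b"
    using face_of_imp_subset[OF assms(1)] \<open>i < length R\<close> by (auto simp: ineq_set_def a_def b_def)
  moreover have "a \<bullet> x0 = b" "\<forall>z\<in>F. a \<bullet> z = b \<longrightarrow> c \<bullet> z \<le> c \<bullet> x0"
    using \<open>x0 \<in> G\<close> assms(5) by (auto simp: G_eq a_def b_def x0_def)
  ultimately obtain l where "0 < l" "\<forall>z\<in>F. (c + l *\<^sub>R a) \<bullet> z \<le> (c + l *\<^sub>R a) \<bullet> x0"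
    using tilted_objective_max[OF assms(2)] \<open>x0 \<in> G\<close> G_eq by blast
  then obtain p2 where p2: "monotone_path F c p2" "hd p2 = x0" "\<forall>z\<in>F. c \<bullet> z \<le> c \<bullet> last p2"
    "length p2 \<le> card ((\<lambda>z. a \<bullet> z) ` {w \<in> vertices F. a \<bullet> w \<le> a \<bullet> x0})"
    using shadow_path[OF assms(2) \<open>x0 \<in> vertices F\<close>] by blast
  have "card ((\<lambda>z. a \<bullet> z) ` {w \<in> vertices F. a \<bullet> w \<le> a \<bullet> x0}) \<le> card ((\<lambda>z. a \<bullet> z) ` vertices F)"
    using polytope_vertices(1)[OF assms(2)] by (intro card_mono) auto
  have "monotone_path F c p1" using \<open>G face_of F\<close> assms(4) by (rule monotone_path_face_of)
  note join = monotone_path_join[OF this p2(1) p2(2)[unfolded x0_def]]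
  show thesis
  proof (rule that[OF \<open>i < length R\<close> join(1)])
    show "hd (p1 @ tl p2) = hd p1" using assms(4) by (simp add: monotone_path_iff)
    show "\<forall>z\<in>F. c \<bullet> z \<le> c \<bullet> last (p1 @ tl p2)" using join(2) p2(3) by simp
    show "length (p1 @ tl p2) + 1 \<le> length p1 + card ((\<lambda>z. fst (R ! i) \<bullet> z) ` vertices F)"
      using p2(1,4) \<open>card _ \<le> card ((\<lambda>z. a \<bullet> z) ` vertices F)\<close>
      by (auto simp: a_def monotone_path_iff)
  qed
qed

lemma level_face_monotone_path:
  fixes P :: "'a::euclidean_space set"
  assumes "P = ineq_set R" "polytope P"
    and level: "\<forall>i<length R. card ((\<lambda>v. fst (R ! i) \<bullet> v) ` vertices P) \<le> m + 1"
  shows "1 \<le> k \<Longrightarrow> F face_of P \<Longrightarrow> aff_dim F = int k \<Longrightarrow> v \<in> vertices F \<Longrightarrow>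
    \<exists>p. monotone_path F c p \<and> hd p = v \<and> (\<forall>z\<in>F. c \<bullet> z \<le> c \<bullet> last p) \<and> length p \<le> (k - 1) * m + 2"
proof (induction k arbitrary: F v rule: nat_induct_at_least)
  case base
  have "polytope F" using face_of_polytope_polytope assms(2) base.prems(1) by blast
  then show ?case
    using monotone_path_aff_dim_1[OF _ _ base.prems(3), of c] base.prems(2) by (simp add: numeral_2_eq_2)
next
  case (Suc k)
  have "polytope F" using face_of_polytope_polytope assms(2) Suc.prems(1) by blast
  have "{v} face_of F" using Suc.prems(3) by (simp add: vertices_def face_of_singleton)
  moreover have "{v} \<noteq> F" using Suc.prems(2) Suc.hyps by auto
  ultimately obtain G where G: "G facet_of F" "v \<in> G"
    using face_of_polyhedron_subset_facet[OF polytope_imp_polyhedron[OF \<open>polytope F\<close>]] by blast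
  have "G face_of F" using G(1) by (rule facet_of_imp_face_of)
  have "aff_dim G = int k" using G(1) Suc.prems(2) by (simp add: facet_of_def)
  moreover have "G face_of P" using \<open>G face_of F\<close> Suc.prems(1) by (rule face_of_trans)
  moreover have "v \<in> vertices G" using Suc.prems(3) G(2) vertices_face_of[OF \<open>G face_of F\<close>] by blast
  ultimately obtain p1 where p1: "monotone_path G c p1" "hd p1 = v" "\<forall>z\<in>G. c \<bullet> z \<le> c \<bullet> last p1"
    "length p1 \<le> (k - 1) * m + 2"
    using Suc.IH by blast
  obtain i p where "i < length R" "monotone_path F c p" "hd p = v" "\<forall>z\<in>F. c \<bullet> z \<le> c \<bullet> last p"
    and len: "length p + 1 \<le> length p1 + card ((\<lambda>z. fst (R ! i) \<bullet> z) ` vertices F)"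
    using monotone_path_extend_from_facet[OF Suc.prems(1)[unfolded assms(1)] \<open>polytope F\<close> G(1) p1(1,3)] p1(2)
    by metis
  have "card ((\<lambda>z. fst (R ! i) \<bullet> z) ` vertices F) \<le> card ((\<lambda>z. fst (R ! i) \<bullet> z) ` vertices P)"
    using vertices_face_of[OF Suc.prems(1)] polytope_vertices(1)[OF assms(2)] by (intro card_mono) auto
  also have "\<dots> \<le> m + 1" using level \<open>i < length R\<close> by blast
  finally have "length p \<le> (Suc k - 1) * m + 2"
    using len p1(4) Suc.hyps by (cases k) auto
  then show ?case using \<open>monotone_path F c p\<close> \<open>hd p = v\<close> \<open>\<forall>z\<in>F. c \<bullet> z \<le> c \<bullet> last p\<close> by blast
qed

lemma shortest_monotone_length_le:
  assumes "monotone_path P c p" "hd p = v" "\<forall>z\<in>P. c \<bullet> z \<le> c \<bullet> last p"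
  shows "shortest_monotone_length P c v \<le> enat (length p - 1)"
proof -
  have "p \<in> {p. monotone_path P c p \<and> hd p = v \<and> (\<forall>u\<in>vertices P. c \<bullet> u \<le> c \<bullet> last p)}"
    using assms vertices_subset by blast
  then show ?thesis unfolding shortest_monotone_length_def by (rule INF_lower)
qed

theorem mainTheorem3:
  fixes P :: "'a::euclidean_space set" and d m :: nat
  assumes "polytope P"
    and "aff_dim P = int d"
    and "d \<ge> 1"
    and "level_polytope (m + 1) P"
  shows "monotone_diameter P \<le> enat ((d - 1) * m + 1)"
proof -
  obtain R where "P = ineq_set R" and level: "\<forall>i<length R. card ((\<lambda>v. fst (R ! i) \<bullet> v) ` vertices P) \<le> m + 1"
    using assms(4) unfolding level_polytope_def by blast
  have "P face_of P" using assms(1) by (simp add: face_of_refl polytope_imp_convex)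
  have bound: "shortest_monotone_length P c v \<le> enat ((d - 1) * m + 1)" if v: "v \<in> vertices P" for c v
  proof -
    obtain p where p: "monotone_path P c p" "hd p = v" "\<forall>z\<in>P. c \<bullet> z \<le> c \<bullet> last p"
      and "length p \<le> (d - 1) * m + 2"
      using level_face_monotone_path[OF \<open>P = ineq_set R\<close> assms(1) level assms(3) \<open>P face_of P\<close> assms(2) v]
      by blast
    have "shortest_monotone_length P c v \<le> enat (length p - 1)"
      using p by (rule shortest_monotone_length_le)
    also have "\<dots> \<le> enat ((d - 1) * m + 1)"
      using \<open>length p \<le> (d - 1) * m + 2\<close> by simp
    finally show ?thesis .
  qed
  then show ?thesis unfolding monotone_diameter_def by (intro SUP_least bound)
qed

end
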